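(* Let $B>4$ and $U\ge1$ be integers, let $N_0\ge 0$ and $E_s>0$, and let $\mathbf{H}\in\mathbb{C}^{B\times U}$ have i.i.d.\ circularly symmetric complex Gaussian entries with zero mean and unit variance. Let $\mathbf{A}=\mathbf{H}^H\mathbf{H}+N_0E_s^{-1}\mathbf{I}_U$, let $\mathbf{D}$ be the diagonal matrix with the same diagonal as $\mathbf{A}$, and let $\mathbf{E}=\mathbf{A}-\mathbf{D}$. Then \[ \mathbb{E}\left[\|\mathbf{D}^{-1}\mathbf{E}\|_F^2\right]\le (U^2-U)\sqrt{\frac{2B(B+1)}{(B-1)(B-2)(B-3)(B-4)}}. \]
   Context: $\|\cdot\|_F$ denotes the Frobenius norm and $\mathbf{H}^H$ the conjugate transpose. *)

theory Defs
  imports "HOL-Probability.Probability"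
begin

text \<open>Matrices are represented as functions nat => nat => complex, with the
  dimensions carried explicitly (entries outside the index range are irrelevant).\<close>

text \<open>Sample space for the channel matrix: one real coordinate for the real part
  (flag False) and one for the imaginary part (flag True) of each entry (b,u),
  b < B, u < U.  All coordinates are i.i.d. N(0,1/2), so each entry
  H b u = Re + i Im is circularly symmetric complex Gaussian, mean 0, variance 1,
  and the entries are i.i.d.\<close>
definition gauss_space :: "nat \<Rightarrow> nat \<Rightarrow> (nat \<times> nat \<times> bool \<Rightarrow> real) measure" where
  "gauss_space B U =
     PiM ({..<B} \<times> {..<U} \<times> UNIV) (\<lambda>_. density lborel (normal_density 0 (sqrt (1/2))))"

definition chan :: "(nat \<times> nat \<times> bool \<Rightarrow> real) \<Rightarrow> nat \<Rightarrow> nat \<Rightarrow> complex" where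
  "chan \<omega> b u = Complex (\<omega> (b, u, False)) (\<omega> (b, u, True))"

definition Amat :: "nat \<Rightarrow> real \<Rightarrow> real \<Rightarrow> (nat \<Rightarrow> nat \<Rightarrow> complex) \<Rightarrow> nat \<Rightarrow> nat \<Rightarrow> complex" where
  "Amat B N0 Es H i j = (\<Sum>b<B. cnj (H b i) * H b j) + (if i = j then complex_of_real (N0 / Es) else 0)"

definition diag_part :: "(nat \<Rightarrow> nat \<Rightarrow> complex) \<Rightarrow> nat \<Rightarrow> nat \<Rightarrow> complex" where
  "diag_part M i j = (if i = j then M i i else 0)"

definition offdiag_part :: "(nat \<Rightarrow> nat \<Rightarrow> complex) \<Rightarrow> nat \<Rightarrow> nat \<Rightarrow> complex" where
  "offdiag_part M i j = M i j - diag_part M i j"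

definition diag_inv :: "(nat \<Rightarrow> nat \<Rightarrow> complex) \<Rightarrow> nat \<Rightarrow> nat \<Rightarrow> complex" where
  "diag_inv D i j = (if i = j then inverse (D i i) else 0)"

definition mat_mul :: "nat \<Rightarrow> (nat \<Rightarrow> nat \<Rightarrow> complex) \<Rightarrow> (nat \<Rightarrow> nat \<Rightarrow> complex) \<Rightarrow> nat \<Rightarrow> nat \<Rightarrow> complex" where
  "mat_mul n M N i j = (\<Sum>k<n. M i k * N k j)"

definition frob_sq :: "nat \<Rightarrow> nat \<Rightarrow> (nat \<Rightarrow> nat \<Rightarrow> complex) \<Rightarrow> real" where
  "frob_sq m n M = (\<Sum>i<m. \<Sum>j<n. (cmod (M i j))\<^sup>2)"

end

theory Submission
  imports Defs
begin

(* Write h_i for column i of H, S_i = |h_i|^2 for its energy and c = N0/Es >= 0.  The matrix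
   D^-1 E vanishes on the diagonal and has entry A_ij / (S_i + c) off it, so its squared
   modulus is at most the "coupling" |h_i^H h_j|^2 / S_i^2.  Conditionally on h_i, the real and
   imaginary parts of h_i^H h_j are linear forms in the independent N(0,1/2) coordinates of h_j,
   each with squared weight norm S_i; hence the conditional mean of the coupling is exactly 1/S_i.
   S_i is a sum of 2B squares of N(0,1/2) variables, and writing 1/S = int_0^oo exp(-tS) dt
   together with E exp(-tZ^2) = (1+t)^(-1/2) gives E[1/S_i] <= int_0^oo (1+t)^(-B) dt = 1/(B-1).
   Summing over the U^2 - U off-diagonal pairs yields (U^2 - U)/(B-1), which for B > 4 lies
   below the stated bound. *)

definition gauss_half :: "real measure" where
  "gauss_half = density lborel (normal_density 0 (sqrt (1/2)))"

lemma prob_space_gauss_half: "prob_space gauss_half"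
  unfolding gauss_half_def using prob_space_normal_density[of "sqrt (1/2)" 0] by simp

lemma sets_gauss_half [simp, measurable_cong]: "sets gauss_half = sets borel"
  unfolding gauss_half_def by simp

lemma space_gauss_half [simp]: "space gauss_half = UNIV"
  unfolding gauss_half_def by simp

lemma nn_integral_gauss_half:
  "(\<integral>\<^sup>+z. f z \<partial>gauss_half) = (\<integral>\<^sup>+z. ennreal (normal_density 0 (sqrt (1/2)) z) * f z \<partial>lborel)"
  if "f \<in> borel_measurable borel"
  unfolding gauss_half_def using that by (simp add: nn_integral_density)

lemma gauss_half_affine_sq:
  "(\<integral>\<^sup>+z. ennreal ((c + w * z)\<^sup>2) \<partial>gauss_half) = ennreal (c\<^sup>2 + w\<^sup>2 / 2)"
proof -
  let ?\<phi> = "normal_density 0 (sqrt (1/2))"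
  have \<sigma>: "0 < sqrt (1/2::real)" by simp
  have m0: "has_bochner_integral lborel ?\<phi> 1"
    using normal_moment_even[OF \<sigma>, of 0 0] by simp
  have m1: "has_bochner_integral lborel (\<lambda>z. ?\<phi> z * z) 0"
    using normal_moment_odd[OF \<sigma>, of 0 0] by simp
  have m2: "has_bochner_integral lborel (\<lambda>z. ?\<phi> z * z\<^sup>2) (1/2)"
    using normal_moment_even[OF \<sigma>, of 0 1] by simp
  have "has_bochner_integral lborel (\<lambda>z. c\<^sup>2 * ?\<phi> z + (2*c*w) * (?\<phi> z * z) + w\<^sup>2 * (?\<phi> z * z\<^sup>2))
          (c\<^sup>2 * 1 + (2*c*w) * 0 + w\<^sup>2 * (1/2))"
    by (intro has_bochner_integral_add has_bochner_integral_mult_right m0 m1 m2)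
  then have "has_bochner_integral lborel (\<lambda>z. ?\<phi> z * (c + w * z)\<^sup>2) (c\<^sup>2 + w\<^sup>2 / 2)"
    by (rule has_bochner_integral_cong[THEN iffD1, rotated -1]) (auto simp: power2_eq_square algebra_simps)
  then show ?thesis
    by (simp add: nn_integral_gauss_half ennreal_mult[symmetric] nn_integral_eq_integral
        has_bochner_integral_integral_eq integrable.intros)
qed

lemma normal_density_half_tilt:
  assumes "t \<ge> 0"
  shows "normal_density 0 (sqrt (1/2)) z * exp (- (t * z\<^sup>2))
       = normal_density 0 (sqrt (1 / (2 * (1 + t)))) z / sqrt (1 + t)"
proof -
  have "sqrt (2 + t * 2) = sqrt 2 * sqrt (1 + t)"
    by (simp flip: real_sqrt_mult add: algebra_simps)
  moreover have "(- (2 * z\<^sup>2) - t * (2 * z\<^sup>2)) / 2 = - z\<^sup>2 - t * z\<^sup>2"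
    by simp
  ultimately have tilted: "normal_density 0 (sqrt (1 / (2 * (1 + t)))) z
      = sqrt (1 + t) / sqrt pi * (exp (- z\<^sup>2) * exp (- t * z\<^sup>2))"
    using assms by (simp add: normal_density_def real_sqrt_divide real_sqrt_mult field_simps flip: exp_add)
  have "normal_density 0 (sqrt (1/2)) z = 1 / sqrt pi * exp (- z\<^sup>2)"
    by (simp add: normal_density_def)
  then show ?thesis
    unfolding tilted using assms by simp
qed

lemma nn_integral_normal_density: "\<sigma> > 0 \<Longrightarrow> (\<integral>\<^sup>+z. ennreal (normal_density \<mu> \<sigma> z) \<partial>lborel) = 1"
  by (subst nn_integral_eq_integral) (simp_all add: integrable_normal_density integral_normal_density)

lemma gauss_half_exp_sq:
  assumes "t \<ge> 0"
  shows "(\<integral>\<^sup>+z. ennreal (exp (- (t * z\<^sup>2))) \<partial>gauss_half) = ennreal (1 / sqrt (1 + t))"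
proof -
  let ?\<phi>\<^sub>t = "normal_density 0 (sqrt (1 / (2 * (1 + t))))"
  have "(\<integral>\<^sup>+z. ennreal (exp (- (t * z\<^sup>2))) \<partial>gauss_half)
      = (\<integral>\<^sup>+z. ennreal (?\<phi>\<^sub>t z) * ennreal (1 / sqrt (1 + t)) \<partial>lborel)"
    using assms by (simp add: nn_integral_gauss_half normal_density_half_tilt ennreal_mult'[symmetric])
  also have "\<dots> = ennreal (1 / sqrt (1 + t))"
    using assms by (simp add: nn_integral_multc nn_integral_normal_density)
  finally show ?thesis .
qed

lemma product_sigma_finite_gauss_half: "product_sigma_finite (\<lambda>_. gauss_half)"
  unfolding product_sigma_finite_def
  using prob_space_imp_sigma_finite[OF prob_space_gauss_half] by simp

lemma prob_space_PiM_gauss_half: "prob_space (PiM K (\<lambda>_. gauss_half))"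
  by (rule prob_space_PiM) (rule prob_space_gauss_half)

lemma borel_measurable_PiM_gauss_half_coord:
  "k \<in> J \<Longrightarrow> (\<lambda>x. x k) \<in> borel_measurable (PiM J (\<lambda>_. gauss_half))"
  using measurable_component_singleton[of k J "\<lambda>_. gauss_half"]
  by (simp add: measurable_cong_sets[OF refl sets_gauss_half])

lemma borel_measurable_linear_form_sq:
  assumes "finite L"
  shows "(\<lambda>y. ennreal ((\<Sum>k\<in>L. w k * y k)\<^sup>2)) \<in> borel_measurable (PiM L (\<lambda>_. gauss_half))"
  using borel_measurable_PiM_gauss_half_coord[of _ L]
  by (intro measurable_compose[OF _ measurable_ennreal] borel_measurable_power borel_measurable_sum
      borel_measurable_times) auto

lemma PiM_gauss_half_linear_form_sq:
  fixes w :: "'i \<Rightarrow> real"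
  assumes "finite K"
  shows "(\<integral>\<^sup>+x. ennreal ((c + (\<Sum>k\<in>K. w k * x k))\<^sup>2) \<partial>PiM K (\<lambda>_. gauss_half))
       = ennreal (c\<^sup>2 + (\<Sum>k\<in>K. (w k)\<^sup>2) / 2)"
  using assms
proof (induction K arbitrary: c rule: finite_induct)
  case empty
  show ?case by (simp add: prob_space.emeasure_space_1[OF prob_space_PiM_gauss_half])
next
  case (insert i K)
  interpret product_sigma_finite "\<lambda>_. gauss_half" by (rule product_sigma_finite_gauss_half)
  have frozen: "(\<Sum>k\<in>K. w k * (if k = i then z else x k)) = (\<Sum>k\<in>K. w k * x k)" for x z
    using insert by (intro sum.cong) auto
  have "(\<integral>\<^sup>+x. ennreal ((c + (\<Sum>k\<in>insert i K. w k * x k))\<^sup>2) \<partial>PiM (insert i K) (\<lambda>_. gauss_half))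
     = (\<integral>\<^sup>+x. (\<integral>\<^sup>+z. ennreal (((c + (\<Sum>k\<in>K. w k * x k)) + w i * z)\<^sup>2) \<partial>gauss_half)
          \<partial>PiM K (\<lambda>_. gauss_half))"
    using insert by (subst product_nn_integral_insert) (auto simp: frozen add_ac)
  also have "\<dots> = (\<integral>\<^sup>+x. ennreal ((c + (\<Sum>k\<in>K. w k * x k))\<^sup>2) + ennreal ((w i)\<^sup>2 / 2)
                    \<partial>PiM K (\<lambda>_. gauss_half))"
    by (simp add: gauss_half_affine_sq ennreal_plus[symmetric] del: ennreal_plus)
  also have "\<dots> = ennreal (c\<^sup>2 + (\<Sum>k\<in>K. (w k)\<^sup>2) / 2) + ennreal ((w i)\<^sup>2 / 2)"
    by (subst nn_integral_add) (auto simp: insert.IH prob_space.emeasure_space_1[OF prob_space_PiM_gauss_half])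
  also have "\<dots> = ennreal (c\<^sup>2 + (\<Sum>k\<in>insert i K. (w k)\<^sup>2) / 2)"
    using insert by (simp add: ennreal_plus[symmetric] sum_nonneg add_divide_distrib add_ac del: ennreal_plus)
  finally show ?case .
qed

lemma PiM_gauss_half_exp_sum_sq:
  assumes "finite K" "t \<ge> 0"
  shows "(\<integral>\<^sup>+x. ennreal (exp (- t * (\<Sum>k\<in>K. (x k)\<^sup>2))) \<partial>PiM K (\<lambda>_. gauss_half))
       = ennreal ((1 / sqrt (1 + t)) ^ card K)"
proof -
  interpret product_sigma_finite "\<lambda>_. gauss_half" by (rule product_sigma_finite_gauss_half)
  have "(\<integral>\<^sup>+x. ennreal (exp (- t * (\<Sum>k\<in>K. (x k)\<^sup>2))) \<partial>PiM K (\<lambda>_. gauss_half))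
      = (\<integral>\<^sup>+x. (\<Prod>k\<in>K. ennreal (exp (- (t * (x k)\<^sup>2)))) \<partial>PiM K (\<lambda>_. gauss_half))"
    using assms by (simp add: sum_distrib_left exp_sum prod_ennreal)
  also have "\<dots> = (\<Prod>k\<in>K. \<integral>\<^sup>+z. ennreal (exp (- (t * z\<^sup>2))) \<partial>gauss_half)"
    using product_nn_integral_prod[OF assms(1), of "\<lambda>_ z. ennreal (exp (- (t * z\<^sup>2)))"] by simp
  also have "\<dots> = ennreal ((1 / sqrt (1 + t)) ^ card K)"
    using assms by (simp add: gauss_half_exp_sq ennreal_power)
  finally show ?thesis .
qed

(* The Laplace representation 1/a = int_0^oo exp(-ta) dt (an inequality covers a = 0). *)
lemma inverse_le_exp_integral:
  fixes a :: real
  assumes "a \<ge> 0"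
  shows "ennreal (1 / a) \<le> (\<integral>\<^sup>+t. ennreal (exp (- t * a)) * indicator {0..} t \<partial>lborel)"
proof (cases "a = 0")
  case False
  then have "a > 0" using assms by simp
  have "(\<integral>\<^sup>+t. ennreal (exp (- t * a)) * indicator {0..} t \<partial>lborel) = 0 - (- exp (- 0 * a) / a)"
  proof (rule nn_integral_FTC_atLeast)
    show "((\<lambda>t. - exp (- t * a) / a) has_real_derivative exp (- x * a)) (at x)" for x
      using \<open>a > 0\<close> by (auto intro!: derivative_eq_intros)
    have "filterlim (\<lambda>t::real. - t * a) at_bot at_top"
      using \<open>a > 0\<close> by (simp add: filterlim_uminus_at_top[symmetric]
          filterlim_at_top_mult_tendsto_pos[OF tendsto_const _ filterlim_ident])
    from tendsto_divide[OF tendsto_minus[OF filterlim_compose[OF exp_at_bot this]] tendsto_const, of a]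
    show "((\<lambda>t. - exp (- t * a) / a) \<longlongrightarrow> 0) at_top"
      using \<open>a > 0\<close> by simp
  qed auto
  then show ?thesis by simp
qed simp

lemma inverse_power_derivative:
  assumes "x \<ge> 0" "m > 0"
  shows "((\<lambda>t::real. - inverse (real m * (1 + t) ^ m)) has_real_derivative inverse ((1 + x) ^ Suc m)) (at x)"
proof -
  obtain k where m: "m = Suc k" using assms(2) gr0_implies_Suc by blast
  have nz: "real m * (1 + x) ^ m \<noteq> 0" using assms by simp
  have "((\<lambda>t. real m * (1 + t) ^ m) has_real_derivative real m * (real m * (1 + x) ^ k)) (at x)"
    unfolding m by (auto intro!: derivative_eq_intros simp del: power_Suc)
  from DERIV_minus[OF DERIV_inverse_fun[OF this nz]] show ?thesis
  proof (rule DERIV_cong)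
    have h: "- (- (c * (c * p) * inverse ((c * (y * p)) ^ Suc (Suc 0)))) = inverse (y * (y * p))"
      if "c > 0" "y > 0" "p > 0" for c y p :: real
      using that by (simp add: field_simps power2_eq_square)
    show "- (- (real m * (real m * (1 + x) ^ k) * inverse ((real m * (1 + x) ^ m) ^ Suc (Suc 0))))
        = inverse ((1 + x) ^ Suc m)"
      unfolding m power_Suc[of "1 + x"] by (rule h) (use assms in auto)
  qed
qed

lemma integral_inverse_power:
  assumes "m > 0"
  shows "(\<integral>\<^sup>+t. ennreal (inverse ((1 + t) ^ Suc m)) * indicator {0..} t \<partial>lborel) = ennreal (1 / real m)"
proof -
  have "(\<integral>\<^sup>+t. ennreal (inverse ((1 + t) ^ Suc m)) * indicator {0..} t \<partial>lborel)
      = 0 - (- inverse (real m * (1 + 0) ^ m))"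
  proof (rule nn_integral_FTC_atLeast)
    show "((\<lambda>t. - inverse (real m * (1 + t) ^ m)) \<longlongrightarrow> 0) at_top"
    proof -
      have "filterlim (\<lambda>t::real. real m * (1 + t) ^ m) at_top at_top"
        using assms by (intro filterlim_tendsto_pos_mult_at_top[OF tendsto_const] filterlim_pow_at_top
            filterlim_tendsto_add_at_top[OF tendsto_const filterlim_ident]) auto
      from tendsto_minus[OF tendsto_inverse_0_at_top[OF this]] show ?thesis
        by simp
    qed
  qed (use assms inverse_power_derivative in auto)
  then show ?thesis by (simp add: divide_inverse)
qed

(* Inverse moment of a sum of 2(m+1) squares of independent N(0,1/2) variables:
   E[1 / sum_k x_k^2] <= 1/m, via the Laplace representation and Fubini. *)
lemma PiM_gauss_half_inverse_sum_sq:
  assumes K: "finite K" "card K = 2 * Suc m" and "m > 0"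
  shows "(\<integral>\<^sup>+x. ennreal (1 / (\<Sum>k\<in>K. (x k)\<^sup>2)) \<partial>PiM K (\<lambda>_. gauss_half)) \<le> ennreal (1 / real m)"
proof -
  interpret pair_sigma_finite lborel "PiM K (\<lambda>_. gauss_half)"
    unfolding pair_sigma_finite_def
    using prob_space_imp_sigma_finite[OF prob_space_PiM_gauss_half] by (auto intro: sigma_finite_lborel)
  have laplace: "(\<integral>\<^sup>+x. ennreal (exp (- t * (\<Sum>k\<in>K. (x k)\<^sup>2))) * indicator {0..} t \<partial>PiM K (\<lambda>_. gauss_half))
      = ennreal (inverse ((1 + t) ^ Suc m)) * indicator {0..} t" for t :: real
  proof (cases "t \<ge> 0")
    case True
    have "(1 / sqrt (1 + t))\<^sup>2 = inverse (1 + t)"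
      using True by (simp add: power_divide inverse_eq_divide)
    then have "(1 / sqrt (1 + t)) ^ card K = inverse ((1 + t) ^ Suc m)"
      unfolding K(2) power_mult by (simp add: power_inverse)
    then show ?thesis
      using PiM_gauss_half_exp_sum_sq[OF K(1) True] True by (simp add: nn_integral_multc)
  qed simp
  have "(\<integral>\<^sup>+x. ennreal (1 / (\<Sum>k\<in>K. (x k)\<^sup>2)) \<partial>PiM K (\<lambda>_. gauss_half))
     \<le> (\<integral>\<^sup>+x. (\<integral>\<^sup>+t. ennreal (exp (- t * (\<Sum>k\<in>K. (x k)\<^sup>2))) * indicator {0..} t \<partial>lborel)
           \<partial>PiM K (\<lambda>_. gauss_half))"
    by (intro nn_integral_mono inverse_le_exp_integral sum_nonneg) auto
  also have "\<dots> = (\<integral>\<^sup>+t. (\<integral>\<^sup>+x. ennreal (exp (- t * (\<Sum>k\<in>K. (x k)\<^sup>2))) * indicator {0..} t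
                    \<partial>PiM K (\<lambda>_. gauss_half)) \<partial>lborel)"
    by (rule Fubini'[where f = "\<lambda>t x. ennreal (exp (- t * (\<Sum>k\<in>K. (x k)\<^sup>2))) * indicator {0..} t"])
      measurable
  also have "\<dots> = (\<integral>\<^sup>+t. ennreal (inverse ((1 + t) ^ Suc m)) * indicator {0..} t \<partial>lborel)"
    by (simp only: laplace)
  also have "\<dots> = ennreal (1 / real m)"
    by (rule integral_inverse_power[OF assms(3)])
  finally show ?thesis .
qed

(* The coordinates of the sample space describing column i of H, and the real quantities built
   from column i and column j: the energy S_i, Re and Im of h_i^H h_j, and their coupling. *)
definition column_coords :: "nat \<Rightarrow> nat \<Rightarrow> (nat \<times> nat \<times> bool) set" where
  "column_coords B i = {..<B} \<times> {i} \<times> UNIV"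

definition col_energy :: "nat \<Rightarrow> nat \<Rightarrow> (nat \<times> nat \<times> bool \<Rightarrow> real) \<Rightarrow> real" where
  "col_energy B i \<omega> = (\<Sum>b<B. (\<omega> (b, i, False))\<^sup>2 + (\<omega> (b, i, True))\<^sup>2)"

definition gram_re :: "nat \<Rightarrow> nat \<Rightarrow> nat \<Rightarrow> (nat \<times> nat \<times> bool \<Rightarrow> real) \<Rightarrow> real" where
  "gram_re B i j \<omega> = (\<Sum>b<B. \<omega> (b, i, False) * \<omega> (b, j, False) + \<omega> (b, i, True) * \<omega> (b, j, True))"

definition gram_im :: "nat \<Rightarrow> nat \<Rightarrow> nat \<Rightarrow> (nat \<times> nat \<times> bool \<Rightarrow> real) \<Rightarrow> real" where
  "gram_im B i j \<omega> = (\<Sum>b<B. \<omega> (b, i, False) * \<omega> (b, j, True) - \<omega> (b, i, True) * \<omega> (b, j, False))"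

definition coupling :: "nat \<Rightarrow> nat \<Rightarrow> nat \<Rightarrow> (nat \<times> nat \<times> bool \<Rightarrow> real) \<Rightarrow> real" where
  "coupling B i j \<omega> = ((gram_re B i j \<omega>)\<^sup>2 + (gram_im B i j \<omega>)\<^sup>2) / (col_energy B i \<omega>)\<^sup>2"

lemma measurable_coupling:
  assumes "column_coords B i \<subseteq> J" "column_coords B j \<subseteq> J"
  shows "coupling B i j \<in> borel_measurable (PiM J (\<lambda>_. gauss_half))"
proof -
  have "(b, i, f) \<in> J" "(b, j, f) \<in> J" if "b < B" for b f
    using assms that by (auto simp: column_coords_def)
  with borel_measurable_PiM_gauss_half_coord show ?thesis
    unfolding coupling_def gram_re_def gram_im_def col_energy_def
    by (intro borel_measurable_divide borel_measurable_add borel_measurable_power borel_measurable_sum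
        borel_measurable_times borel_measurable_diff) auto
qed

lemma sum_column_coords:
  "(\<Sum>k\<in>column_coords B j. h k) = (\<Sum>b<B. h (b, j, False) + h (b, j, True))"
proof -
  have "(\<Sum>k\<in>column_coords B j. h k) = (\<Sum>b<B. \<Sum>p\<in>{j} \<times> (UNIV :: bool set). h (b, p))"
    unfolding column_coords_def by (subst sum.cartesian_product) simp
  also have "\<dots> = (\<Sum>b<B. h (b, j, False) + h (b, j, True))"
    by (simp add: UNIV_bool add.commute)
  finally show ?thesis .
qed

lemma col_energy_column_coords: "col_energy B i x = (\<Sum>k\<in>column_coords B i. (x k)\<^sup>2)"
  by (simp add: col_energy_def sum_column_coords)

lemma card_column_coords: "card (column_coords B i) = 2 * B"
  by (simp add: column_coords_def card_cartesian_product)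

lemma col_energy_nonneg: "col_energy B i \<omega> \<ge> 0"
  unfolding col_energy_def by (intro sum_nonneg) auto

lemma gram_eq_0_if_col_energy_eq_0:
  assumes "col_energy B i \<omega> = 0"
  shows "gram_re B i j \<omega> = 0" "gram_im B i j \<omega> = 0"
proof -
  have "\<forall>b\<in>{..<B}. (\<omega> (b, i, False))\<^sup>2 + (\<omega> (b, i, True))\<^sup>2 = 0"
    using assms unfolding col_energy_def by (subst (asm) sum_nonneg_eq_0_iff) auto
  then have "\<omega> (b, i, False) = 0 \<and> \<omega> (b, i, True) = 0" if "b < B" for b
    using that by (auto simp: add_nonneg_eq_0_iff)
  then show "gram_re B i j \<omega> = 0" "gram_im B i j \<omega> = 0"
    unfolding gram_re_def gram_im_def by (auto intro!: sum.neutral)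
qed

lemma Amat_chan_offdiag:
  "i \<noteq> j \<Longrightarrow> Amat B N0 Es (chan \<omega>) i j = Complex (gram_re B i j \<omega>) (gram_im B i j \<omega>)"
  by (simp add: Amat_def chan_def gram_re_def gram_im_def complex_eq_iff Re_sum Im_sum)

lemma Amat_chan_diag:
  "Amat B N0 Es (chan \<omega>) i i = complex_of_real (col_energy B i \<omega> + N0 / Es)"
  by (simp add: Amat_def chan_def col_energy_def complex_eq_iff Re_sum Im_sum power2_eq_square)

lemma jacobi_matrix_entry:
  assumes "i < n"
  shows "mat_mul n (diag_inv (diag_part A)) (offdiag_part A) i j = (if i = j then 0 else A i j / A i i)"
  using assms unfolding mat_mul_def diag_inv_def diag_part_def offdiag_part_def
  by (simp add: if_distrib[of "\<lambda>z. z * _"] divide_inverse mult.commute cong: if_cong)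

lemma jacobi_entry_sq_le_coupling:
  assumes "i < U" "N0 / Es \<ge> 0"
  shows "(cmod (mat_mul U (diag_inv (diag_part (Amat B N0 Es (chan \<omega>))))
                  (offdiag_part (Amat B N0 Es (chan \<omega>))) i j))\<^sup>2
       \<le> (if i = j then 0 else coupling B i j \<omega>)"
proof (cases "i = j")
  case False
  let ?S = "col_energy B i \<omega>" and ?G = "(gram_re B i j \<omega>)\<^sup>2 + (gram_im B i j \<omega>)\<^sup>2"
  have "(cmod (Amat B N0 Es (chan \<omega>) i j / Amat B N0 Es (chan \<omega>) i i))\<^sup>2 = ?G / (?S + N0 / Es)\<^sup>2"
    using False by (simp add: Amat_chan_offdiag Amat_chan_diag norm_divide cmod_power2 power_divide)
  also have "\<dots> \<le> ?G / ?S\<^sup>2"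
  proof (cases "?S = 0")
    case True
    then show ?thesis using gram_eq_0_if_col_energy_eq_0 by simp
  next
    case False
    then have "?S > 0" using col_energy_nonneg[of B i \<omega>] by simp
    with assms(2) show ?thesis by (intro divide_left_mono power_mono mult_pos_pos) auto
  qed
  finally show ?thesis
    using False assms(1) by (simp add: jacobi_matrix_entry coupling_def)
qed (use assms(1) jacobi_matrix_entry in simp)

(* Conditionally on column i (given by x), the real and imaginary parts of h_i^H h_j are linear
   forms in the coordinates of column j, with the following weights read off column i. *)
definition weight_re :: "nat \<Rightarrow> nat \<Rightarrow> nat \<Rightarrow> (nat \<times> nat \<times> bool \<Rightarrow> real) \<Rightarrow> nat \<times> nat \<times> bool \<Rightarrow> real"
  where "weight_re B i j x k = (if k \<in> column_coords B j then x (fst k, i, snd (snd k)) else 0)"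

definition weight_im :: "nat \<Rightarrow> nat \<Rightarrow> nat \<Rightarrow> (nat \<times> nat \<times> bool \<Rightarrow> real) \<Rightarrow> nat \<times> nat \<times> bool \<Rightarrow> real"
  where "weight_im B i j x k =
    (if k \<in> column_coords B j then if snd (snd k) then x (fst k, i, False) else - x (fst k, i, True) else 0)"

lemma gram_linear_forms_given_column:
  fixes B U i j :: nat and x :: "nat \<times> nat \<times> bool \<Rightarrow> real"
  assumes "i \<noteq> j" "j < U"
    and K_def: "K = column_coords B i" and L_def: "L = {..<B} \<times> {..<U} \<times> UNIV - column_coords B i"
  shows "gram_re B i j (merge K L (x, y)) = (\<Sum>k\<in>L. weight_re B i j x k * y k)"
    and "gram_im B i j (merge K L (x, y)) = (\<Sum>k\<in>L. weight_im B i j x k * y k)"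
    and "col_energy B i (merge K L (x, y)) = col_energy B i x"
    and "(\<Sum>k\<in>L. (weight_re B i j x k)\<^sup>2) = col_energy B i x"
    and "(\<Sum>k\<in>L. (weight_im B i j x k)\<^sup>2) = col_energy B i x"
proof -
  have Cj_L: "column_coords B j \<subseteq> L" using assms(1,2) unfolding L_def column_coords_def by auto
  have on_Cj: "(\<Sum>k\<in>L. w k * g k) = (\<Sum>k\<in>column_coords B j. w k * g k)"
    if "\<And>k. k \<notin> column_coords B j \<Longrightarrow> w k = 0" for w g :: "_ \<Rightarrow> real"
    using Cj_L that by (intro sum.mono_neutral_right) (auto simp: L_def)
  have merge_i: "merge K L (x, y) (b, i, f) = x (b, i, f)" if "b < B" for b f
    using that by (simp add: merge_def K_def column_coords_def)
  have merge_j: "merge K L (x, y) (b, j, f) = y (b, j, f)" if "b < B" for b f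
    using that assms(1,2) by (simp add: merge_def K_def L_def column_coords_def)
  show "gram_re B i j (merge K L (x, y)) = (\<Sum>k\<in>L. weight_re B i j x k * y k)"
    by (subst on_Cj) (auto simp: weight_re_def gram_re_def sum_column_coords merge_i merge_j intro!: sum.cong)
  show "gram_im B i j (merge K L (x, y)) = (\<Sum>k\<in>L. weight_im B i j x k * y k)"
    by (subst on_Cj) (auto simp: weight_im_def gram_im_def sum_column_coords merge_i merge_j intro!: sum.cong)
  show "col_energy B i (merge K L (x, y)) = col_energy B i x"
    by (auto simp: col_energy_def merge_i intro!: sum.cong)
  show "(\<Sum>k\<in>L. (weight_re B i j x k)\<^sup>2) = col_energy B i x"
    "(\<Sum>k\<in>L. (weight_im B i j x k)\<^sup>2) = col_energy B i x"
    unfolding power2_eq_square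
    by (subst on_Cj; auto simp: weight_re_def weight_im_def col_energy_def sum_column_coords
          power2_eq_square add.commute intro!: sum.cong)+
qed

(* Conditional mean of the coupling: with column i (coordinates K) fixed to x and all other
   coordinates (L) integrated out, the coupling is (Re^2 + Im^2) / S_i^2 for two linear forms of
   squared weight norm S_i, so its mean is (S_i/2 + S_i/2) / S_i^2 = 1/S_i. *)
lemma integral_coupling_given_column:
  fixes B U i j :: nat and x :: "nat \<times> nat \<times> bool \<Rightarrow> real"
  assumes "i \<noteq> j" "j < U"
  defines "K \<equiv> column_coords B i" and "L \<equiv> {..<B} \<times> {..<U} \<times> UNIV - column_coords B i"
  shows "(\<integral>\<^sup>+y. ennreal (coupling B i j (merge K L (x, y))) \<partial>PiM L (\<lambda>_. gauss_half))
       = ennreal (1 / col_energy B i x)"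
proof -
  let ?S = "col_energy B i x" and ?w_re = "weight_re B i j x" and ?w_im = "weight_im B i j x"
  note forms = gram_linear_forms_given_column[where x = x, OF assms(1,2)
      K_def[THEN meta_eq_to_obj_eq] L_def[THEN meta_eq_to_obj_eq]]
  have "finite L" unfolding L_def by simp
  have split: "ennreal (coupling B i j (merge K L (x, y)))
      = ennreal ((\<Sum>k\<in>L. ?w_re k * y k)\<^sup>2) * ennreal (1 / ?S\<^sup>2)
      + ennreal ((\<Sum>k\<in>L. ?w_im k * y k)\<^sup>2) * ennreal (1 / ?S\<^sup>2)" for y
    by (simp add: coupling_def forms(1-3) add_divide_distrib ennreal_mult[symmetric]
        ennreal_plus[symmetric] del: ennreal_plus)
  have "(\<integral>\<^sup>+y. ennreal (coupling B i j (merge K L (x, y))) \<partial>PiM L (\<lambda>_. gauss_half))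
      = ennreal (?S / 2) * ennreal (1 / ?S\<^sup>2) + ennreal (?S / 2) * ennreal (1 / ?S\<^sup>2)"
    unfolding split
    using PiM_gauss_half_linear_form_sq[OF \<open>finite L\<close>, of 0 ?w_re]
      PiM_gauss_half_linear_form_sq[OF \<open>finite L\<close>, of 0 ?w_im]
    by (subst nn_integral_add)
      (simp_all add: nn_integral_multc borel_measurable_linear_form_sq[OF \<open>finite L\<close>] forms(4,5))
  also have "\<dots> = ennreal (1 / ?S)"
    using col_energy_nonneg[of B i x]
    by (simp add: ennreal_mult[symmetric] ennreal_plus[symmetric] power2_eq_square field_simps
        del: ennreal_plus)
  finally show ?thesis .
qed

lemma expected_coupling_le:
  assumes "i \<noteq> j" "i < U" "j < U" "B \<ge> 2"
  shows "(\<integral>\<^sup>+\<omega>. ennreal (coupling B i j \<omega>) \<partial>PiM ({..<B} \<times> {..<U} \<times> UNIV) (\<lambda>_. gauss_half))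
       \<le> ennreal (1 / (real B - 1))"
proof -
  interpret product_sigma_finite "\<lambda>_. gauss_half" by (rule product_sigma_finite_gauss_half)
  define K where "K = column_coords B i"
  define L where "L = {..<B} \<times> {..<U} \<times> (UNIV :: bool set) - column_coords B i"
  have KL: "{..<B} \<times> {..<U} \<times> UNIV = K \<union> L" "K \<inter> L = {}" "finite K" "finite L"
    using assms(2) unfolding K_def L_def column_coords_def by auto
  have "column_coords B i \<subseteq> K \<union> L" "column_coords B j \<subseteq> K \<union> L"
    using assms(2,3) unfolding KL(1)[symmetric] column_coords_def by auto
  then have "(\<integral>\<^sup>+\<omega>. ennreal (coupling B i j \<omega>) \<partial>PiM ({..<B} \<times> {..<U} \<times> UNIV) (\<lambda>_. gauss_half))
      = (\<integral>\<^sup>+x. (\<integral>\<^sup>+y. ennreal (coupling B i j (merge K L (x, y))) \<partial>PiM L (\<lambda>_. gauss_half))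
           \<partial>PiM K (\<lambda>_. gauss_half))"
    unfolding KL(1) by (intro product_nn_integral_fold KL(2-4) measurable_compose[OF measurable_coupling]) auto
  also have "\<dots> = (\<integral>\<^sup>+x. ennreal (1 / (\<Sum>k\<in>K. (x k)\<^sup>2)) \<partial>PiM K (\<lambda>_. gauss_half))"
    using assms by (simp add: K_def L_def integral_coupling_given_column col_energy_column_coords)
  also have "\<dots> \<le> ennreal (1 / real (B - 1))"
    using assms(4) by (intro PiM_gauss_half_inverse_sum_sq KL(3)) (simp_all add: K_def card_column_coords)
  finally show ?thesis
    using assms(4) by (simp add: of_nat_diff)
qed

lemma sum_offdiag_const:
  "(\<Sum>i<U. \<Sum>j<U. if i = j then 0 else r) = (real U ^ 2 - real U) * (r :: real)"
proof -
  have "(\<Sum>j<U. if i = j then 0 else r) = (real U - 1) * r" if "i < U" for i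
    using that by (simp add: sum.If_cases algebra_simps Diff_eq[symmetric])
  then have "(\<Sum>i<U. \<Sum>j<U. if i = j then 0 else r) = (\<Sum>i<U. (real U - 1) * r)"
    by (intro sum.cong) auto
  then show ?thesis by (simp add: power2_eq_square algebra_simps)
qed

lemma frob_jacobi_le_coupling_sum:
  assumes "N0 / Es \<ge> 0"
  shows "frob_sq U U (let A = Amat B N0 Es (chan \<omega>) in mat_mul U (diag_inv (diag_part A)) (offdiag_part A))
       \<le> (\<Sum>i<U. \<Sum>j<U. if i = j then 0 else coupling B i j \<omega>)"
  unfolding frob_sq_def Let_def by (intro sum_mono jacobi_entry_sq_le_coupling assms) auto

lemma expected_coupling_sum_le:
  assumes "B \<ge> 2"
  shows "(\<integral>\<^sup>+\<omega>. ennreal (\<Sum>i<U. \<Sum>j<U. if i = j then 0 else coupling B i j \<omega>)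
            \<partial>PiM ({..<B} \<times> {..<U} \<times> UNIV) (\<lambda>_. gauss_half))
       \<le> ennreal ((real U ^ 2 - real U) * (1 / (real B - 1)))"
proof -
  let ?M = "PiM ({..<B} \<times> {..<U} \<times> (UNIV :: bool set)) (\<lambda>_. gauss_half)"
  let ?c = "\<lambda>i j \<omega>. if i = j then 0 else coupling B i j \<omega>"
  have nonneg: "?c i j \<omega> \<ge> 0" for i j \<omega>
    by (simp add: coupling_def)
  have meas: "(\<lambda>\<omega>. ennreal (?c i j \<omega>)) \<in> borel_measurable ?M" if "i < U" "j < U" for i j
    using that by (intro measurable_compose[OF _ measurable_ennreal] measurable_If measurable_coupling)
      (auto simp: column_coords_def)
  have "(\<integral>\<^sup>+\<omega>. ennreal (\<Sum>i<U. \<Sum>j<U. ?c i j \<omega>) \<partial>?M) = (\<integral>\<^sup>+\<omega>. (\<Sum>i<U. \<Sum>j<U. ennreal (?c i j \<omega>)) \<partial>?M)"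
    by (simp add: nonneg sum_nonneg sum_ennreal)
  also have "\<dots> = (\<Sum>i<U. \<integral>\<^sup>+\<omega>. (\<Sum>j<U. ennreal (?c i j \<omega>)) \<partial>?M)"
    by (rule nn_integral_sum) (use meas in \<open>auto intro!: borel_measurable_sum\<close>)
  also have "\<dots> = (\<Sum>i<U. \<Sum>j<U. \<integral>\<^sup>+\<omega>. ennreal (?c i j \<omega>) \<partial>?M)"
    by (intro sum.cong refl nn_integral_sum) (use meas in auto)
  also have "\<dots> \<le> (\<Sum>i<U. \<Sum>j<U. ennreal (if i = j then 0 else 1 / (real B - 1)))"
    using assms expected_coupling_le by (intro sum_mono) auto
  also have "\<dots> = ennreal (\<Sum>i<U. \<Sum>j<U. if i = j then 0 else 1 / (real B - 1))"
    using assms by (simp add: sum_nonneg sum_ennreal)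
  also have "\<dots> = ennreal ((real U ^ 2 - real U) * (1 / (real B - 1)))"
    by (simp only: sum_offdiag_const)
  finally show ?thesis .
qed

lemma inverse_le_paper_bound:
  fixes x :: real
  assumes "x > 4"
  shows "1 / (x - 1) \<le> sqrt (2 * x * (x + 1) / ((x - 1) * (x - 2) * (x - 3) * (x - 4)))"
proof (rule real_le_rsqrt)
  have "(x - 2) * (x - 3) * (x - 4) \<le> (x * (x + 1)) * (2 * (x - 1))"
    using assms by (intro mult_mono) (auto intro: mult_mono)
  then show "(1 / (x - 1))\<^sup>2 \<le> 2 * x * (x + 1) / ((x - 1) * (x - 2) * (x - 3) * (x - 4))"
    using assms by (simp add: power2_eq_square divide_simps) (simp add: algebra_simps)
qed

theorem lemma3:
  fixes B U :: nat and N0 Es :: real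
  assumes "B > 4" and "U \<ge> 1" and "N0 \<ge> 0" and "Es > 0"
  shows "(\<integral>\<^sup>+ \<omega>. ennreal (frob_sq U U
            (let A = Amat B N0 Es (chan \<omega>) in mat_mul U (diag_inv (diag_part A)) (offdiag_part A)))
          \<partial>gauss_space B U)
         \<le> ennreal ((real U ^ 2 - real U) *
              sqrt (2 * real B * (real B + 1) /
                    ((real B - 1) * (real B - 2) * (real B - 3) * (real B - 4))))"
proof -
  let ?M = "PiM ({..<B} \<times> {..<U} \<times> (UNIV :: bool set)) (\<lambda>_. gauss_half)"
  have space: "gauss_space B U = ?M"
    by (simp add: gauss_space_def gauss_half_def)
  have "N0 / Es \<ge> 0" using assms by simp
  then have "(\<integral>\<^sup>+ \<omega>. ennreal (frob_sq U U
            (let A = Amat B N0 Es (chan \<omega>) in mat_mul U (diag_inv (diag_part A)) (offdiag_part A))) \<partial>?M)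
      \<le> (\<integral>\<^sup>+\<omega>. ennreal (\<Sum>i<U. \<Sum>j<U. if i = j then 0 else coupling B i j \<omega>) \<partial>?M)"
    by (intro nn_integral_mono ennreal_leI frob_jacobi_le_coupling_sum)
  also have "\<dots> \<le> ennreal ((real U ^ 2 - real U) * (1 / (real B - 1)))"
    using assms(1) by (intro expected_coupling_sum_le) simp
  also have "\<dots> \<le> ennreal ((real U ^ 2 - real U) *
              sqrt (2 * real B * (real B + 1) / ((real B - 1) * (real B - 2) * (real B - 3) * (real B - 4))))"
    using assms(1,2) by (intro ennreal_leI mult_left_mono inverse_le_paper_bound) (simp_all add: power2_eq_square)
  finally show ?thesis unfolding space .
qed

end
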